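(* For every $L\in\Omega$, $q\in\mathbb{R}^d$, bounded open $U\subseteq\mathbb{R}^d$ and $w,\xi\in H^1(U)$, $$\fint_U\big(L(Dw(x),x)-q\cdot Dw(x)\big)dx\leq2\fint_U\big(L(D\xi(x),x)-q\cdot D\xi(x)\big)dx-\mu(U,q,L)+2\Lambda\fint_U|Dw(x)-D\xi(x)|^2dx.$$
   Context: Fix $d\geq2$ and $\Lambda\ge1$. $\Omega$ is the set of functions $L:\mathbb{R}^d\times\mathbb{R}^d\to\mathbb{R}$, measurable in $x$ and continuous in $p$, with $\frac14|p_1-p_2|^2\leq\frac12L(p_1,x)+\frac12L(p_2,x)-L(\frac12p_1+\frac12p_2,x)\leq\frac\Lambda4|p_1-p_2|^2$ for all $p_1,p_2,x\in\mathbb{R}^d$. For bounded open $U$, $q\in\mathbb{R}^d$, $L\in\Omega$: $\mu(U,q,L):=\min\{\fint_U(L(Dw(x),x)-q\cdot Dw(x))dx: w\in H^1(U)\}$ (assumed finite). *)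

theory Defs
  imports "HOL-Analysis.Analysis"
begin

text \<open>Smooth (C-infinity) real functions: all iterated derivatives exist everywhere.\<close>
definition smooth_fun :: "('a::euclidean_space \<Rightarrow> real) \<Rightarrow> bool" where
  "smooth_fun f \<longleftrightarrow> (\<exists>F. f \<in> F \<and> (\<forall>g\<in>F. \<exists>G. (\<forall>x. (g has_derivative G x) (at x))
       \<and> (\<forall>i\<in>Basis. (\<lambda>x. G x i) \<in> F)))"

definition test_fun :: "'a::euclidean_space set \<Rightarrow> ('a \<Rightarrow> real) \<Rightarrow> bool" where
  "test_fun U \<phi> \<longleftrightarrow> smooth_fun \<phi> \<and> compact (closure {x. \<phi> x \<noteq> 0})
      \<and> closure {x. \<phi> x \<noteq> 0} \<subseteq> U"

definition H1 :: "'a::euclidean_space set \<Rightarrow> ('a \<Rightarrow> real) \<Rightarrow> ('a \<Rightarrow> 'a) \<Rightarrow> bool" where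
  "H1 U w G \<longleftrightarrow>
     set_borel_measurable lebesgue U w \<and> set_integrable lebesgue U (\<lambda>x. (w x)\<^sup>2) \<and>
     set_borel_measurable lebesgue U G \<and> set_integrable lebesgue U (\<lambda>x. (norm (G x))\<^sup>2) \<and>
     (\<forall>\<phi> \<phi>'. test_fun U \<phi> \<and> (\<forall>x. (\<phi> has_derivative \<phi>' x) (at x)) \<longrightarrow>
        (\<forall>i\<in>Basis. (LINT x:U|lebesgue. w x * \<phi>' x i) = - (LINT x:U|lebesgue. (G x \<bullet> i) * \<phi> x)))"

definition Omega :: "real \<Rightarrow> ('a::euclidean_space \<Rightarrow> 'a \<Rightarrow> real) set" where
  "Omega \<Lambda> = {L. (\<forall>p. (\<lambda>x. L p x) \<in> borel_measurable lebesgue) \<and> (\<forall>x. continuous_on UNIV (\<lambda>p. L p x)) \<and>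
     (\<forall>p1 p2 x. (1/4) * (norm (p1 - p2))\<^sup>2 \<le> (1/2) * L p1 x + (1/2) * L p2 x - L ((1/2) *\<^sub>R p1 + (1/2) *\<^sub>R p2) x
        \<and> (1/2) * L p1 x + (1/2) * L p2 x - L ((1/2) *\<^sub>R p1 + (1/2) *\<^sub>R p2) x \<le> (\<Lambda>/4) * (norm (p1 - p2))\<^sup>2)}"

definition avg :: "'a::euclidean_space set \<Rightarrow> ('a \<Rightarrow> real) \<Rightarrow> real" where
  "avg U f = (LINT x:U|lebesgue. f x) / measure lebesgue U"

definition energy_integrand :: "('a::euclidean_space \<Rightarrow> 'a \<Rightarrow> real) \<Rightarrow> 'a \<Rightarrow> ('a \<Rightarrow> 'a) \<Rightarrow> 'a \<Rightarrow> real" where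
  "energy_integrand L q G x = L (G x) x - q \<bullet> G x"

text \<open>Admissible (finite-energy) H^1 functions, and mu as the infimum (a minimum under the hypotheses).\<close>
definition admissible :: "'a::euclidean_space set \<Rightarrow> 'a \<Rightarrow> ('a \<Rightarrow> 'a \<Rightarrow> real) \<Rightarrow> ('a \<Rightarrow> 'a) \<Rightarrow> bool" where
  "admissible U q L G \<longleftrightarrow> (\<exists>w. H1 U w G) \<and> set_integrable lebesgue U (energy_integrand L q G)"

definition mu :: "'a::euclidean_space set \<Rightarrow> 'a \<Rightarrow> ('a \<Rightarrow> 'a \<Rightarrow> real) \<Rightarrow> real" where
  "mu U q L = Inf {avg U (energy_integrand L q G) | G. admissible U q L G}"

end

theory Submission
  imports Defs
begin

text \<open>Put \<open>G = 2 D\<xi> - Dw\<close>, the gradient of \<open>2\<xi> - w \<in> H\<^sup>1(U)\<close>. Then \<open>D\<xi>\<close> is the midpoint of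
  \<open>Dw\<close> and \<open>G\<close>, so the two-sided uniform convexity of \<open>L\<close> gives pointwise
  \<open>L(Dw) \<le> 2 L(D\<xi>) - L(G) + 2\<Lambda>|Dw - D\<xi>|\<^sup>2\<close> (the \<open>q\<close>-terms are linear and cancel) together with
  the reverse bound \<open>L(G) \<ge> 2 L(D\<xi>) - L(Dw)\<close>. The two bounds sandwich the energy density of \<open>G\<close>
  between integrable functions, so \<open>2\<xi> - w\<close> is an admissible competitor and its energy is at
  least \<open>\<mu>\<close>; averaging the first bound over \<open>U\<close> gives the claim.\<close>

lemma tendsto_dyadic_floor: "(\<lambda>n. real_of_int \<lfloor>2^n * y\<rfloor> / 2^n) \<longlonglongrightarrow> y"
proof (rule LIM_zero_cancel, rule Lim_null_comparison)
  show "(\<lambda>n. 1 / (2::real)^n) \<longlonglongrightarrow> 0"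
    by (simp add: LIMSEQ_divide_realpow_zero)
  have "norm (real_of_int \<lfloor>2^n * y\<rfloor> / 2^n - y) \<le> 1 / 2^n" for n :: nat
  proof -
    have "real_of_int \<lfloor>2^n * y\<rfloor> / 2^n - y = (real_of_int \<lfloor>2^n * y\<rfloor> - 2^n * y) / 2^n"
      by (simp add: diff_divide_distrib)
    moreover have "\<bar>real_of_int \<lfloor>2^n * y\<rfloor> - 2^n * y\<bar> \<le> 1"
      by linarith
    ultimately show ?thesis
      by (simp add: abs_divide divide_right_mono)
  qed
  then show "\<forall>\<^sub>F n in sequentially. norm (real_of_int \<lfloor>2^n * y\<rfloor> / 2^n - y) \<le> 1 / 2^n"
    by simp
qed

definition dyadic_approx :: "nat \<Rightarrow> 'a::euclidean_space \<Rightarrow> 'a" where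
  "dyadic_approx n v = (\<Sum>i\<in>Basis. (real_of_int \<lfloor>2^n * (v \<bullet> i)\<rfloor> / 2^n) *\<^sub>R i)"

lemma tendsto_dyadic_approx: "(\<lambda>n. dyadic_approx n v) \<longlonglongrightarrow> v"
proof -
  have "(\<lambda>n. dyadic_approx n v) \<longlonglongrightarrow> (\<Sum>i\<in>Basis. (v \<bullet> i) *\<^sub>R i)"
    unfolding dyadic_approx_def by (intro tendsto_sum tendsto_scaleR tendsto_dyadic_floor tendsto_const)
  then show ?thesis by (simp add: euclidean_representation)
qed

lemma borel_measurable_dyadic_approx: "dyadic_approx n \<in> borel_measurable borel"
  unfolding dyadic_approx_def by measurable

lemma countable_range_dyadic_approx: "countable (range (dyadic_approx n :: 'a::euclidean_space \<Rightarrow> 'a))"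
proof -
  have "range (dyadic_approx n :: 'a \<Rightarrow> 'a)
      \<subseteq> (\<lambda>k. \<Sum>i\<in>Basis. (real_of_int (k i) / 2^n) *\<^sub>R i) ` (Basis \<rightarrow>\<^sub>E (UNIV :: int set))"
  proof
    fix y assume "y \<in> range (dyadic_approx n :: 'a \<Rightarrow> 'a)"
    then obtain v where "y = dyadic_approx n v" by blast
    then show "y \<in> (\<lambda>k. \<Sum>i\<in>Basis. (real_of_int (k i) / 2^n) *\<^sub>R i) ` (Basis \<rightarrow>\<^sub>E UNIV)"
      unfolding dyadic_approx_def
      by (intro image_eqI[where x="restrict (\<lambda>i. \<lfloor>2^n * (v \<bullet> i)\<rfloor>) Basis"] sum.cong) auto
  qed
  moreover have "countable (Basis \<rightarrow>\<^sub>E (UNIV :: int set))"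
    by (intro countable_PiE) auto
  ultimately show ?thesis
    by (blast intro: countable_subset countable_image)
qed

lemma measurable_count_space_countable_range:
  fixes g :: "'a \<Rightarrow> 'b::metric_space"
  assumes "g \<in> borel_measurable M" "countable C" "g ` space M \<subseteq> C"
  shows "g \<in> measurable M (count_space C)"
  unfolding measurable_count_space_eq_countable[OF \<open>countable C\<close>]
proof (intro conjI ballI)
  show "g \<in> space M \<rightarrow> C" using assms(3) by blast
  fix c
  show "g -` {c} \<inter> space M \<in> sets M"
    using measurable_sets[OF assms(1), of "{c}"] by simp
qed

text \<open>Approximate the argument by its countably-valued dyadic truncations.\<close>
lemma borel_measurable_caratheodory:
  fixes L :: "'b::euclidean_space \<Rightarrow> 'a \<Rightarrow> 'c::metric_space"
  assumes "\<And>p. (\<lambda>x. L p x) \<in> borel_measurable M" "\<And>x. continuous_on UNIV (\<lambda>p. L p x)"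
    and "F \<in> borel_measurable M"
  shows "(\<lambda>x. L (F x) x) \<in> borel_measurable M"
proof (rule borel_measurable_LIMSEQ_metric)
  fix n
  have "(\<lambda>x. dyadic_approx n (F x)) \<in> measurable M (count_space (range (dyadic_approx n)))"
    using measurable_compose[OF assms(3) borel_measurable_dyadic_approx] countable_range_dyadic_approx
    by (intro measurable_count_space_countable_range) auto
  then show "(\<lambda>x. L (dyadic_approx n (F x)) x) \<in> borel_measurable M"
    by (rule measurable_compose_countable'[OF assms(1) _ countable_range_dyadic_approx])
next
  fix x
  show "(\<lambda>n. L (dyadic_approx n (F x)) x) \<longlonglongrightarrow> L (F x) x"
    using assms(2) tendsto_dyadic_approx
    by (intro isCont_tendsto_compose[where g="\<lambda>p. L p x"]) (auto simp: continuous_on_eq_continuous_at)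
qed

lemma set_borel_measurable_restrict_space_iff:
  fixes f :: "'a \<Rightarrow> 'b::real_normed_vector"
  assumes "A \<in> sets M"
  shows "set_borel_measurable M A f \<longleftrightarrow> f \<in> borel_measurable (restrict_space M A)"
  using assms unfolding set_borel_measurable_def by (simp add: borel_measurable_restrict_space_iff)

lemma set_integrable_between:
  fixes f g h :: "'a \<Rightarrow> real"
  assumes "set_integrable M A f" "set_integrable M A h" "set_borel_measurable M A g"
    and "\<And>x. x \<in> A \<Longrightarrow> f x \<le> g x" "\<And>x. x \<in> A \<Longrightarrow> g x \<le> h x"
  shows "set_integrable M A g"
proof (rule set_integrable_bound[where f="\<lambda>x. \<bar>f x\<bar> + \<bar>h x\<bar>"])
  show "set_integrable M A (\<lambda>x. \<bar>f x\<bar> + \<bar>h x\<bar>)"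
    using assms(1,2) by (intro set_integral_add set_integrable_abs)
  show "AE x in M. x \<in> A \<longrightarrow> norm (g x) \<le> norm (\<bar>f x\<bar> + \<bar>h x\<bar>)"
    using assms(4,5) by (intro AE_I2) force
qed fact

lemma set_integrable_norm_square_lincomb:
  fixes f g :: "'a \<Rightarrow> 'b::euclidean_space"
  assumes "A \<in> sets M" "set_borel_measurable M A f" "set_borel_measurable M A g"
    and "set_integrable M A (\<lambda>x. (norm (f x))\<^sup>2)" "set_integrable M A (\<lambda>x. (norm (g x))\<^sup>2)"
  shows "set_integrable M A (\<lambda>x. (norm (a *\<^sub>R f x + b *\<^sub>R g x))\<^sup>2)"
proof (rule set_integrable_bound[where f="\<lambda>x. 2 * a\<^sup>2 * (norm (f x))\<^sup>2 + 2 * b\<^sup>2 * (norm (g x))\<^sup>2"])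
  show "set_integrable M A (\<lambda>x. 2 * a\<^sup>2 * (norm (f x))\<^sup>2 + 2 * b\<^sup>2 * (norm (g x))\<^sup>2)"
    using assms(4,5) by (intro set_integral_add set_integrable_mult_right)
  show "set_borel_measurable M A (\<lambda>x. (norm (a *\<^sub>R f x + b *\<^sub>R g x))\<^sup>2)"
    using assms(2,3) unfolding set_borel_measurable_restrict_space_iff[OF assms(1)] by measurable
  have "(norm (a *\<^sub>R u + b *\<^sub>R v))\<^sup>2 \<le> 2 * a\<^sup>2 * (norm u)\<^sup>2 + 2 * b\<^sup>2 * (norm v)\<^sup>2" for u v :: 'b
  proof -
    have "norm (a *\<^sub>R u + b *\<^sub>R v) \<le> \<bar>a\<bar> * norm u + \<bar>b\<bar> * norm v"
      using norm_triangle_ineq[of "a *\<^sub>R u" "b *\<^sub>R v"] by simp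
    then have "(norm (a *\<^sub>R u + b *\<^sub>R v))\<^sup>2 \<le> (\<bar>a\<bar> * norm u + \<bar>b\<bar> * norm v)\<^sup>2"
      by (intro power_mono) auto
    also have "\<dots> \<le> 2 * (\<bar>a\<bar> * norm u)\<^sup>2 + 2 * (\<bar>b\<bar> * norm v)\<^sup>2"
      using sum_squares_ge_zero[of "\<bar>a\<bar> * norm u - \<bar>b\<bar> * norm v" 0]
      by (simp add: power2_eq_square algebra_simps)
    also have "\<dots> = 2 * a\<^sup>2 * (norm u)\<^sup>2 + 2 * b\<^sup>2 * (norm v)\<^sup>2"
      by (simp add: power_mult_distrib)
    finally show ?thesis .
  qed
  then show "AE x in M. x \<in> A \<longrightarrow> norm ((norm (a *\<^sub>R f x + b *\<^sub>R g x))\<^sup>2)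
      \<le> norm (2 * a\<^sup>2 * (norm (f x))\<^sup>2 + 2 * b\<^sup>2 * (norm (g x))\<^sup>2)"
    by (intro AE_I2) simp
qed

lemma set_integrable_inner_square:
  fixes f :: "'a \<Rightarrow> 'b::euclidean_space"
  assumes "A \<in> sets M" "set_borel_measurable M A f" "set_integrable M A (\<lambda>x. (norm (f x))\<^sup>2)"
  shows "set_integrable M A (\<lambda>x. (f x \<bullet> c)\<^sup>2)"
proof (rule set_integrable_bound[where f="\<lambda>x. (norm c)\<^sup>2 * (norm (f x))\<^sup>2"])
  show "set_integrable M A (\<lambda>x. (norm c)\<^sup>2 * (norm (f x))\<^sup>2)"
    using assms(3) by (rule set_integrable_mult_right)
  show "set_borel_measurable M A (\<lambda>x. (f x \<bullet> c)\<^sup>2)"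
    using assms(2) unfolding set_borel_measurable_restrict_space_iff[OF assms(1)] by measurable
  have "(u \<bullet> c)\<^sup>2 \<le> (norm c)\<^sup>2 * (norm u)\<^sup>2" for u :: 'b
  proof -
    have "\<bar>u \<bullet> c\<bar> \<le> norm c * norm u"
      using Cauchy_Schwarz_ineq2[of u c] by (simp add: mult.commute)
    then have "\<bar>u \<bullet> c\<bar>\<^sup>2 \<le> (norm c * norm u)\<^sup>2"
      by (intro power_mono) auto
    then show ?thesis by (simp add: power_mult_distrib)
  qed
  then show "AE x in M. x \<in> A \<longrightarrow> norm ((f x \<bullet> c)\<^sup>2) \<le> norm ((norm c)\<^sup>2 * (norm (f x))\<^sup>2)"
    by (intro AE_I2) simp
qed

lemma set_integrable_square_mult_bounded:
  fixes f h :: "'a::euclidean_space \<Rightarrow> real"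
  assumes "A \<in> lmeasurable"
    and "set_borel_measurable lebesgue A f" "set_integrable lebesgue A (\<lambda>x. (f x)\<^sup>2)"
    and "h \<in> borel_measurable lebesgue" "\<And>x. \<bar>h x\<bar> \<le> B"
  shows "set_integrable lebesgue A (\<lambda>x. f x * h x)"
proof (rule set_integrable_bound[where f="\<lambda>x. B * (1 + (f x)\<^sup>2)"])
  have "set_integrable lebesgue A (\<lambda>x. 1::real)"
    using lmeasurable_iff_integrable[THEN iffD1, OF assms(1)] by (simp add: set_integrable_def)
  then show "set_integrable lebesgue A (\<lambda>x. B * (1 + (f x)\<^sup>2))"
    using assms(3) by (intro set_integrable_mult_right set_integral_add)
  show "set_borel_measurable lebesgue A (\<lambda>x. f x * h x)"
    using assms(2,4) unfolding set_borel_measurable_restrict_space_iff[OF fmeasurableD[OF assms(1)]]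
    by (measurable, simp add: measurable_restrict_space1)
  have "\<bar>f x * h x\<bar> \<le> B * (1 + (f x)\<^sup>2)" for x
  proof -
    have "\<bar>f x\<bar> \<le> 1 + (f x)\<^sup>2"
      using sum_squares_ge_zero[of "\<bar>f x\<bar> - 1" 0] by (simp add: power2_eq_square algebra_simps)
    then show ?thesis
      using assms(5)[of x] mult_mono[of "\<bar>h x\<bar>" B "\<bar>f x\<bar>" "1 + (f x)\<^sup>2"]
      by (simp add: abs_mult mult.commute)
  qed
  then show "AE x in lebesgue. x \<in> A \<longrightarrow> norm (f x * h x) \<le> norm (B * (1 + (f x)\<^sup>2))"
    by (intro AE_I2) (metis abs_ge_self order_trans real_norm_def)
qed

lemma continuous_compact_support_bounded:
  fixes f :: "'a::topological_space \<Rightarrow> real"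
  assumes "continuous_on UNIV f" "compact S" "\<And>x. x \<notin> S \<Longrightarrow> f x = 0"
  shows "\<exists>B. \<forall>x. \<bar>f x\<bar> \<le> B"
proof -
  have "compact (f ` S)"
    using assms(1,2) continuous_on_subset compact_continuous_image by blast
  then obtain B where "\<forall>y\<in>f ` S. \<bar>y\<bar> \<le> B"
    using compact_imp_bounded bounded_real by metis
  then have "\<bar>f x\<bar> \<le> max B 0" for x
    using assms(3)[of x] by (cases "x \<in> S") auto
  then show ?thesis by blast
qed

lemma test_fun_bounded_continuous:
  fixes \<phi> :: "'a::euclidean_space \<Rightarrow> real"
  assumes "test_fun U \<phi>" "\<And>x. (\<phi> has_derivative \<phi>' x) (at x)" "i \<in> Basis"
  shows "continuous_on UNIV \<phi>" "continuous_on UNIV (\<lambda>x. \<phi>' x i)"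
    and "\<exists>B. \<forall>x. \<bar>\<phi> x\<bar> \<le> B" "\<exists>B. \<forall>x. \<bar>\<phi>' x i\<bar> \<le> B"
proof -
  define S where "S = closure {x. \<phi> x \<noteq> 0}"
  have "compact S" "smooth_fun \<phi>"
    using assms(1) unfolding test_fun_def S_def by auto
  then obtain F where F: "\<phi> \<in> F"
    "\<forall>g\<in>F. \<exists>G. (\<forall>x. (g has_derivative G x) (at x)) \<and> (\<forall>i\<in>Basis. (\<lambda>x. G x i) \<in> F)"
    unfolding smooth_fun_def by blast
  then obtain G where G: "\<And>x. (\<phi> has_derivative G x) (at x)" "(\<lambda>x. G x i) \<in> F"
    using assms(3) by blast
  have "\<phi>' = G"
    by (intro ext has_derivative_unique[OF assms(2) G(1)])
  moreover obtain H where "\<And>x. ((\<lambda>x. G x i) has_derivative H x) (at x)"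
    using F(2) G(2) by blast
  then have "continuous_on UNIV (\<lambda>x. G x i)"
    using has_derivative_continuous continuous_at_imp_continuous_on by blast
  ultimately show cont': "continuous_on UNIV (\<lambda>x. \<phi>' x i)"
    by (simp only:)
  show cont: "continuous_on UNIV \<phi>"
    using assms(2) has_derivative_continuous continuous_at_imp_continuous_on by blast
  have zero: "\<phi> x = 0" if "x \<notin> S" for x
    using that closure_subset[of "{x. \<phi> x \<noteq> 0}"] unfolding S_def by auto
  have zero': "\<phi>' x i = 0" if "x \<notin> S" for x
  proof -
    have "(\<phi> has_derivative (\<lambda>_. 0)) (at x)"
    proof (rule has_derivative_transform_within_open[where f="\<lambda>_. 0" and s="- S"])
      show "open (- S)"
        using \<open>compact S\<close> by (simp add: open_Compl compact_imp_closed)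
    qed (use that zero in auto)
    then have "\<phi>' x = (\<lambda>_. 0)"
      by (rule has_derivative_unique[OF assms(2)])
    then show ?thesis by simp
  qed
  show "\<exists>B. \<forall>x. \<bar>\<phi> x\<bar> \<le> B"
    using continuous_compact_support_bounded[OF cont \<open>compact S\<close> zero] .
  show "\<exists>B. \<forall>x. \<bar>\<phi>' x i\<bar> \<le> B"
    using continuous_compact_support_bounded[OF cont' \<open>compact S\<close> zero'] .
qed

lemma H1_lincomb:
  fixes u v :: "'a::euclidean_space \<Rightarrow> real" and Du Dv :: "'a \<Rightarrow> 'a"
  assumes U: "U \<in> lmeasurable" and u: "H1 U u Du" and v: "H1 U v Dv"
  shows "H1 U (\<lambda>x. a * u x + b * v x) (\<lambda>x. a *\<^sub>R Du x + b *\<^sub>R Dv x)"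
proof -
  have Us: "U \<in> sets lebesgue"
    using U by (rule fmeasurableD)
  note restrict = set_borel_measurable_restrict_space_iff[OF Us]
  have mu: "set_borel_measurable lebesgue U u" "set_borel_measurable lebesgue U Du"
    and su: "set_integrable lebesgue U (\<lambda>x. (u x)\<^sup>2)" "set_integrable lebesgue U (\<lambda>x. (norm (Du x))\<^sup>2)"
    and wu: "\<And>\<phi> \<phi>' i. test_fun U \<phi> \<Longrightarrow> (\<forall>x. (\<phi> has_derivative \<phi>' x) (at x)) \<Longrightarrow> i \<in> Basis \<Longrightarrow>
        (LINT x:U|lebesgue. u x * \<phi>' x i) = - (LINT x:U|lebesgue. (Du x \<bullet> i) * \<phi> x)"
    using u unfolding H1_def by blast+
  have mv: "set_borel_measurable lebesgue U v" "set_borel_measurable lebesgue U Dv"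
    and sv: "set_integrable lebesgue U (\<lambda>x. (v x)\<^sup>2)" "set_integrable lebesgue U (\<lambda>x. (norm (Dv x))\<^sup>2)"
    and wv: "\<And>\<phi> \<phi>' i. test_fun U \<phi> \<Longrightarrow> (\<forall>x. (\<phi> has_derivative \<phi>' x) (at x)) \<Longrightarrow> i \<in> Basis \<Longrightarrow>
        (LINT x:U|lebesgue. v x * \<phi>' x i) = - (LINT x:U|lebesgue. (Dv x \<bullet> i) * \<phi> x)"
    using v unfolding H1_def by blast+
  have weak: "(LINT x:U|lebesgue. (a * u x + b * v x) * \<phi>' x i)
      = - (LINT x:U|lebesgue. ((a *\<^sub>R Du x + b *\<^sub>R Dv x) \<bullet> i) * \<phi> x)"
    if \<phi>: "test_fun U \<phi>" "\<forall>x. (\<phi> has_derivative \<phi>' x) (at x)" and i: "i \<in> Basis"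
    for \<phi> :: "'a \<Rightarrow> real" and \<phi>' i
  proof -
    note \<phi>_props = test_fun_bounded_continuous[OF \<phi>(1) \<phi>(2)[rule_format] i]
    obtain B where B: "\<And>x. \<bar>\<phi> x\<bar> \<le> B"
      using \<phi>_props(3) by blast
    obtain B' where B': "\<And>x. \<bar>\<phi>' x i\<bar> \<le> B'"
      using \<phi>_props(4) by blast
    have "\<phi> \<in> borel_measurable lebesgue" "(\<lambda>x. \<phi>' x i) \<in> borel_measurable lebesgue"
      using \<phi>_props(1,2) continuous_imp_measurable_on_sets_lebesgue[of UNIV] by (auto simp: lebesgue_on_UNIV_eq)
    note bounded_mult = set_integrable_square_mult_bounded[OF U _ _ this(1) B]
      set_integrable_square_mult_bounded[OF U _ _ this(2) B']
    have Dm: "set_borel_measurable lebesgue U (\<lambda>x. Du x \<bullet> i)" "set_borel_measurable lebesgue U (\<lambda>x. Dv x \<bullet> i)"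
      using mu(2) mv(2) unfolding restrict by measurable
    have "(LINT x:U|lebesgue. (a * u x + b * v x) * \<phi>' x i)
        = a * (LINT x:U|lebesgue. u x * \<phi>' x i) + b * (LINT x:U|lebesgue. v x * \<phi>' x i)"
      using bounded_mult(2)[OF mu(1) su(1)] bounded_mult(2)[OF mv(1) sv(1)]
      by (simp add: distrib_right mult.assoc)
    also have "\<dots> = - (a * (LINT x:U|lebesgue. (Du x \<bullet> i) * \<phi> x) + b * (LINT x:U|lebesgue. (Dv x \<bullet> i) * \<phi> x))"
      using wu[OF \<phi> i] wv[OF \<phi> i] by simp
    also have "\<dots> = - (LINT x:U|lebesgue. ((a *\<^sub>R Du x + b *\<^sub>R Dv x) \<bullet> i) * \<phi> x)"
      using bounded_mult(1)[OF Dm(1) set_integrable_inner_square[OF Us mu(2) su(2)]]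
        bounded_mult(1)[OF Dm(2) set_integrable_inner_square[OF Us mv(2) sv(2)]]
      by (simp add: inner_add_left distrib_right mult.assoc)
    finally show ?thesis .
  qed
  have "set_integrable lebesgue U (\<lambda>x. (a * u x + b * v x)\<^sup>2)"
    using set_integrable_norm_square_lincomb[OF Us mu(1) mv(1), of a b] su(1) sv(1) by simp
  moreover have "set_integrable lebesgue U (\<lambda>x. (norm (a *\<^sub>R Du x + b *\<^sub>R Dv x))\<^sup>2)"
    using set_integrable_norm_square_lincomb[OF Us mu(2) mv(2) su(2) sv(2)] .
  moreover have "set_borel_measurable lebesgue U (\<lambda>x. a * u x + b * v x)"
    "set_borel_measurable lebesgue U (\<lambda>x. a *\<^sub>R Du x + b *\<^sub>R Dv x)"
    using mu mv unfolding restrict by measurable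
  ultimately show ?thesis
    unfolding H1_def using weak by blast
qed

lemma Omega_reflection_bounds:
  assumes "L \<in> Omega \<Lambda>"
  shows "L p x - q \<bullet> p \<le> 2 * (L m x - q \<bullet> m) - (L (2 *\<^sub>R m - p) x - q \<bullet> (2 *\<^sub>R m - p))
           + 2 * \<Lambda> * (norm (p - m))\<^sup>2"
    and "2 * (L m x - q \<bullet> m) - (L p x - q \<bullet> p) \<le> L (2 *\<^sub>R m - p) x - q \<bullet> (2 *\<^sub>R m - p)"
proof -
  have conv: "(1/4) * (norm (p - r))\<^sup>2 \<le> (1/2) * L p x + (1/2) * L r x - L ((1/2) *\<^sub>R p + (1/2) *\<^sub>R r) x
      \<and> (1/2) * L p x + (1/2) * L r x - L ((1/2) *\<^sub>R p + (1/2) *\<^sub>R r) x \<le> (\<Lambda>/4) * (norm (p - r))\<^sup>2" for r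
    using assms unfolding Omega_def by blast
  have mid: "(1/2) *\<^sub>R p + (1/2) *\<^sub>R (2 *\<^sub>R m - p) = m"
    by (simp add: algebra_simps)
  have "(norm (p - (2 *\<^sub>R m - p)))\<^sup>2 = 4 * (norm (p - m))\<^sup>2"
    using norm_scaleR[of 2 "p - m"] by (simp add: algebra_simps scaleR_2 power_mult_distrib)
  then have lower: "(norm (p - m))\<^sup>2 \<le> (1/2) * L p x + (1/2) * L (2 *\<^sub>R m - p) x - L m x"
    and upper: "(1/2) * L p x + (1/2) * L (2 *\<^sub>R m - p) x - L m x \<le> \<Lambda> * (norm (p - m))\<^sup>2"
    using conv[of "2 *\<^sub>R m - p"] unfolding mid by auto
  have inner_reflection: "q \<bullet> (2 *\<^sub>R m - p) = 2 * (q \<bullet> m) - q \<bullet> p"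
    by (simp add: inner_diff_right)
  show "L p x - q \<bullet> p \<le> 2 * (L m x - q \<bullet> m) - (L (2 *\<^sub>R m - p) x - q \<bullet> (2 *\<^sub>R m - p))
           + 2 * \<Lambda> * (norm (p - m))\<^sup>2"
    using upper unfolding inner_reflection by (simp add: field_simps)
  show "2 * (L m x - q \<bullet> m) - (L p x - q \<bullet> p) \<le> L (2 *\<^sub>R m - p) x - q \<bullet> (2 *\<^sub>R m - p)"
    using order_trans[OF zero_le_power2 lower] unfolding inner_reflection by (simp add: field_simps)
qed

lemma set_borel_measurable_energy_integrand:
  assumes "L \<in> Omega \<Lambda>" "U \<in> sets lebesgue" "set_borel_measurable lebesgue U G"
  shows "set_borel_measurable lebesgue U (energy_integrand L q G)"
proof -
  have L: "\<And>p. (\<lambda>x. L p x) \<in> borel_measurable lebesgue" "\<And>x. continuous_on UNIV (\<lambda>p. L p x)"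
    using assms(1) unfolding Omega_def by auto
  have G: "G \<in> borel_measurable (restrict_space lebesgue U)"
    using assms(3) unfolding set_borel_measurable_restrict_space_iff[OF assms(2)] .
  have "(\<lambda>x. L (G x) x) \<in> borel_measurable (restrict_space lebesgue U)"
    using measurable_restrict_space1[OF L(1)] L(2) G by (rule borel_measurable_caratheodory)
  moreover have "(\<lambda>x. q \<bullet> G x) \<in> borel_measurable (restrict_space lebesgue U)"
    using G by measurable
  ultimately show ?thesis
    unfolding energy_integrand_def set_borel_measurable_restrict_space_iff[OF assms(2)]
    by (rule borel_measurable_diff)
qed

lemma mu_le_avg:
  assumes "bdd_below {avg U (energy_integrand L q G) | G. admissible U q L G}"
    and "admissible U q L G"
  shows "mu U q L \<le> avg U (energy_integrand L q G)"
  unfolding mu_def using assms by (intro cInf_lower) auto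

lemma avg_le_combination:
  assumes "set_integrable lebesgue U f" "set_integrable lebesgue U g"
    and "set_integrable lebesgue U h" "set_integrable lebesgue U k"
    and "\<And>x. x \<in> U \<Longrightarrow> f x \<le> a * g x - h x + b * k x"
  shows "avg U f \<le> a * avg U g - avg U h + b * avg U k"
proof -
  have "(LINT x:U|lebesgue. f x) \<le> (LINT x:U|lebesgue. a * g x - h x + b * k x)"
    using assms by (intro set_integral_mono) auto
  also have "\<dots> = a * (LINT x:U|lebesgue. g x) - (LINT x:U|lebesgue. h x) + b * (LINT x:U|lebesgue. k x)"
    using assms(2-4) by (simp add: set_integral_add(2) set_integral_diff(2))
  finally have "avg U f \<le> (a * (LINT x:U|lebesgue. g x) - (LINT x:U|lebesgue. h x)
      + b * (LINT x:U|lebesgue. k x)) / measure lebesgue U"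
    unfolding avg_def by (rule divide_right_mono) simp
  then show ?thesis
    unfolding avg_def by (simp add: add_divide_distrib diff_divide_distrib)
qed

lemma admissible_reflection:
  assumes L: "L \<in> Omega \<Lambda>" and U: "U \<in> lmeasurable"
    and "H1 U w Dw" "H1 U \<xi> D\<xi>"
    and "set_integrable lebesgue U (energy_integrand L q Dw)"
    and "set_integrable lebesgue U (energy_integrand L q D\<xi>)"
  shows "admissible U q L (\<lambda>x. 2 *\<^sub>R D\<xi> x - Dw x)"
proof -
  define G where "G = (\<lambda>x. 2 *\<^sub>R D\<xi> x - Dw x)"
  let ?e = "energy_integrand L q"
  have "H1 U (\<lambda>x. 2 * \<xi> x - w x) G"
    using H1_lincomb[OF U assms(4,3), of 2 "-1"] by (simp add: G_def)
  moreover have "set_integrable lebesgue U (?e G)"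
  proof (rule set_integrable_between[where f="\<lambda>x. 2 * ?e D\<xi> x - ?e Dw x"
        and h="\<lambda>x. 2 * ?e D\<xi> x - ?e Dw x + 2 * \<Lambda> * (norm (Dw x - D\<xi> x))\<^sup>2"])
    show "set_borel_measurable lebesgue U (?e G)"
      using \<open>H1 U (\<lambda>x. 2 * \<xi> x - w x) G\<close> fmeasurableD[OF U]
        set_borel_measurable_energy_integrand[OF L]
      unfolding H1_def by blast
    have "set_integrable lebesgue U (\<lambda>x. (norm (Dw x - D\<xi> x))\<^sup>2)"
      using set_integrable_norm_square_lincomb[OF fmeasurableD[OF U], of Dw D\<xi> 1 "-1"] assms(3,4)
      unfolding H1_def by simp
    then show "set_integrable lebesgue U (\<lambda>x. 2 * ?e D\<xi> x - ?e Dw x + 2 * \<Lambda> * (norm (Dw x - D\<xi> x))\<^sup>2)"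
      using assms(5,6) by auto
    show "?e G x \<le> 2 * ?e D\<xi> x - ?e Dw x + 2 * \<Lambda> * (norm (Dw x - D\<xi> x))\<^sup>2"
      and "2 * ?e D\<xi> x - ?e Dw x \<le> ?e G x" for x
      using Omega_reflection_bounds[OF L, where p="Dw x" and m="D\<xi> x" and x=x and q=q]
      unfolding energy_integrand_def G_def by auto
  qed (use assms(5,6) in auto)
  ultimately show ?thesis
    unfolding admissible_def G_def by blast
qed

theorem lemma2p2:
  fixes \<Lambda> :: real and L :: "'a::euclidean_space \<Rightarrow> 'a \<Rightarrow> real" and q :: 'a
    and U :: "'a set" and w \<xi> :: "'a \<Rightarrow> real" and Dw D\<xi> :: "'a \<Rightarrow> 'a"
  assumes "DIM('a) \<ge> 2" and "\<Lambda> \<ge> 1" and "L \<in> Omega \<Lambda>"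
    and "open U" and "bounded U"
    and "\<exists>v. admissible U q L v \<and> (\<forall>G. admissible U q L G \<longrightarrow>
           avg U (energy_integrand L q v) \<le> avg U (energy_integrand L q G))"
    and "H1 U w Dw" and "H1 U \<xi> D\<xi>"
    and "set_integrable lebesgue U (energy_integrand L q Dw)"
    and "set_integrable lebesgue U (energy_integrand L q D\<xi>)"
  shows "avg U (\<lambda>x. L (Dw x) x - q \<bullet> Dw x)
     \<le> 2 * avg U (\<lambda>x. L (D\<xi> x) x - q \<bullet> D\<xi> x) - mu U q L + 2 * \<Lambda> * avg U (\<lambda>x. (norm (Dw x - D\<xi> x))\<^sup>2)"
proof -
  have U: "U \<in> lmeasurable"
    using \<open>bounded U\<close> \<open>open U\<close> by (simp add: bounded_set_imp_lmeasurable)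
  define G where "G = (\<lambda>x. 2 *\<^sub>R D\<xi> x - Dw x)"
  define N where "N = (\<lambda>x. (norm (Dw x - D\<xi> x))\<^sup>2)"
  let ?e = "energy_integrand L q"
  have adm: "admissible U q L G"
    unfolding G_def by (rule admissible_reflection[OF assms(3) U assms(7-10)])
  have "bdd_below {avg U (?e G) | G. admissible U q L G}"
    using assms(6) by (auto simp: bdd_below_def)
  then have "mu U q L \<le> avg U (?e G)"
    using adm by (rule mu_le_avg)
  moreover have "set_integrable lebesgue U N"
    using set_integrable_norm_square_lincomb[OF fmeasurableD[OF U], of Dw D\<xi> 1 "-1"] assms(7,8)
    unfolding H1_def N_def by simp
  then have "avg U (?e Dw) \<le> 2 * avg U (?e D\<xi>) - avg U (?e G) + 2 * \<Lambda> * avg U N"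
    using assms(9,10) adm Omega_reflection_bounds(1)[OF assms(3)]
    by (intro avg_le_combination) (auto simp: admissible_def energy_integrand_def G_def N_def)
  ultimately have "avg U (?e Dw) \<le> 2 * avg U (?e D\<xi>) - mu U q L + 2 * \<Lambda> * avg U N"
    by linarith
  then show ?thesis
    unfolding energy_integrand_def N_def .
qed

end
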